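(* For any step size $\eta\le4/\rho^2$, any $Z\in\mathbb{R}^{m\times d}$ and any $t$, \[ \|W_t-Z\|^2+2\eta\sum_{i<t}\widehat{\mathcal R}^{(i)}(W_{i+1})\le\|W_0-Z\|^2+2\eta\sum_{i<t}\widehat{\mathcal R}^{(i)}(Z). \]
   Context: Sample $((x_k,y_k))_{k=1}^n$ with $\|x_k\|\le1$, $y_k\in\{\pm1\}$. $\ell(r)=\ln(1+e^{-r})$. Network of width $m$, temperature $\rho>0$, signs $a_j\in\{\pm1\}$: for $W$ with rows $w_j^\top$, $f(x;W)=\frac{\rho}{\sqrt m}\sum_ja_j\max\{0,w_j^\top x\}$, $\nabla f(x;W)=\frac{\rho}{\sqrt m}\sum_ja_j\mathbf 1[w_j^\top x\ge0]e_jx^\top$. $\widehat{\mathcal R}(W)=\frac1n\sum_k\ell(y_kf(x_k;W))$, $\nabla\widehat{\mathcal R}(W)=\frac1n\sum_k\ell'(y_kf(x_k;W))y_k\nabla f(x_k;W)$. Gradient descent from the initialization $W_0$: $W_{i+1}=W_i-\eta\nabla\widehat{\mathcal R}(W_i)$. $\widehat{\mathcal R}^{(i)}(V)=\frac1n\sum_k\ell(y_k\langle\nabla f(x_k;W_i),V\rangle)$ with $\langle A,B\rangle=\mathrm{tr}(A^\top B)$. $\|\cdot\|$ Frobenius norm. *)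

theory Defs
  imports "HOL-Analysis.Analysis"
begin

text \<open>Matrices in R^{m x d} are represented as functions nat => nat => real,
  only entries j < m, l < d being relevant; vectors in R^d as nat => real
  (entries l < d). The sample is indexed by k < n.\<close>

type_synonym mat = "nat \<Rightarrow> nat \<Rightarrow> real"
type_synonym vec = "nat \<Rightarrow> real"

definition logloss :: "real \<Rightarrow> real" where
  "logloss r = ln (1 + exp (- r))"

definition logloss' :: "real \<Rightarrow> real" where
  "logloss' r = - 1 / (1 + exp r)"

definition vnorm :: "nat \<Rightarrow> vec \<Rightarrow> real" where
  "vnorm d x = sqrt (\<Sum>l<d. (x l)^2)"

definition frob :: "nat \<Rightarrow> nat \<Rightarrow> mat \<Rightarrow> real" where
  "frob m d A = sqrt (\<Sum>j<m. \<Sum>l<d. (A j l)^2)"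

definition frob_inner :: "nat \<Rightarrow> nat \<Rightarrow> mat \<Rightarrow> mat \<Rightarrow> real" where
  "frob_inner m d A B = (\<Sum>j<m. \<Sum>l<d. A j l * B j l)"

definition row_dot :: "nat \<Rightarrow> mat \<Rightarrow> nat \<Rightarrow> vec \<Rightarrow> real" where
  "row_dot d W j x = (\<Sum>l<d. W j l * x l)"

definition net :: "nat \<Rightarrow> nat \<Rightarrow> real \<Rightarrow> vec \<Rightarrow> mat \<Rightarrow> vec \<Rightarrow> real" where
  "net m d \<rho> a W x = \<rho> / sqrt (real m) * (\<Sum>j<m. a j * max 0 (row_dot d W j x))"

definition net_grad :: "nat \<Rightarrow> nat \<Rightarrow> real \<Rightarrow> vec \<Rightarrow> mat \<Rightarrow> vec \<Rightarrow> mat" where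
  "net_grad m d \<rho> a W x = (\<lambda>j l. if j < m \<and> l < d then
       \<rho> / sqrt (real m) * a j * (if row_dot d W j x \<ge> 0 then 1 else 0) * x l else 0)"

definition emp_risk :: "nat \<Rightarrow> nat \<Rightarrow> real \<Rightarrow> vec \<Rightarrow> nat \<Rightarrow> (nat \<Rightarrow> vec) \<Rightarrow> (nat \<Rightarrow> real) \<Rightarrow> mat \<Rightarrow> real" where
  "emp_risk m d \<rho> a n xs ys W = (1 / real n) * (\<Sum>k<n. logloss (ys k * net m d \<rho> a W (xs k)))"

definition emp_risk_grad :: "nat \<Rightarrow> nat \<Rightarrow> real \<Rightarrow> vec \<Rightarrow> nat \<Rightarrow> (nat \<Rightarrow> vec) \<Rightarrow> (nat \<Rightarrow> real) \<Rightarrow> mat \<Rightarrow> mat" where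
  "emp_risk_grad m d \<rho> a n xs ys W = (\<lambda>j l. (1 / real n) *
      (\<Sum>k<n. logloss' (ys k * net m d \<rho> a W (xs k)) * ys k * net_grad m d \<rho> a W (xs k) j l))"

primrec gd :: "nat \<Rightarrow> nat \<Rightarrow> real \<Rightarrow> vec \<Rightarrow> nat \<Rightarrow> (nat \<Rightarrow> vec) \<Rightarrow> (nat \<Rightarrow> real) \<Rightarrow> real \<Rightarrow> mat \<Rightarrow> nat \<Rightarrow> mat" where
  "gd m d \<rho> a n xs ys \<eta> W0 0 = W0"
| "gd m d \<rho> a n xs ys \<eta> W0 (Suc i) =
     (let W = gd m d \<rho> a n xs ys \<eta> W0 i in
      (\<lambda>j l. W j l - \<eta> * emp_risk_grad m d \<rho> a n xs ys W j l))"

definition lin_risk :: "nat \<Rightarrow> nat \<Rightarrow> real \<Rightarrow> vec \<Rightarrow> nat \<Rightarrow> (nat \<Rightarrow> vec) \<Rightarrow> (nat \<Rightarrow> real) \<Rightarrow> mat \<Rightarrow> mat \<Rightarrow> real" where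
  "lin_risk m d \<rho> a n xs ys Wi V = (1 / real n) *
      (\<Sum>k<n. logloss (ys k * frob_inner m d (net_grad m d \<rho> a Wi (xs k)) V))"

end

theory Submission
  imports Defs
begin

(* Because the ReLU network is positively homogeneous in W, f(x;W) = <grad f(x;W), W>, so one
  gradient step on the empirical risk at W_i is exactly one gradient step on the convex linearised
  risk R^(i) at W_i.  The logistic loss is convex and has 1/4-Lipschitz derivative, and the features
  y_k grad f(x_k;W_i) have norm at most rho.  The standard one-step inequality for gradient descent
  on a smooth convex function with step size eta <= 4/rho^2 then gives
  ||W_(i+1) - Z||^2 + 2 eta R^(i)(W_(i+1)) <= ||W_i - Z||^2 + 2 eta R^(i)(Z),
  and summing over i < t telescopes. *)

lemma min_at_derivative_sign_change:
  fixes h h' :: "real \<Rightarrow> real"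
  assumes "\<And>x. (h has_real_derivative h' x) (at x)"
    and "\<And>x. a \<le> x \<Longrightarrow> 0 \<le> h' x"
    and "\<And>x. x \<le> a \<Longrightarrow> h' x \<le> 0"
  shows "h a \<le> h b"
proof (cases "a \<le> b")
  case True
  then show ?thesis by (intro deriv_nonneg_imp_mono[of a b h h']) (use assms in auto)
next
  case False
  then show ?thesis by (intro deriv_nonpos_imp_antimono[of b a h h']) (use assms in auto)
qed

lemma DERIV_logloss: "(logloss has_real_derivative logloss' r) (at r)"
proof -
  have "((\<lambda>r. ln (1 + exp (- r))) has_real_derivative exp (- r) * (- 1) / (1 + exp (- r))) (at r)"
    by (auto intro!: derivative_eq_intros simp: add_pos_pos)
  moreover have "exp (- r) * (- 1) / (1 + exp (- r)) = logloss' r"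
    unfolding logloss'_def by (simp add: exp_minus field_simps add_pos_pos)
  ultimately show ?thesis unfolding logloss_def[abs_def] by simp
qed

lemma DERIV_logloss': "(logloss' has_real_derivative exp r / (1 + exp r)^2) (at r)"
  unfolding logloss'_def[abs_def]
  by (auto intro!: derivative_eq_intros simp: add_pos_pos power2_eq_square)
     (smt (verit) exp_gt_zero)

lemma exp_div_one_plus_exp_squared_le: "exp r / (1 + exp r)^2 \<le> (1 / 4 :: real)"
proof -
  have "4 * exp r \<le> (1 + exp r)^2"
    using zero_le_power2[of "1 - exp r"] by (simp add: power2_eq_square algebra_simps)
  then show ?thesis by (simp add: divide_le_eq add_pos_pos)
qed

lemma logloss'_mono: "a \<le> b \<Longrightarrow> logloss' a \<le> logloss' b"
  unfolding logloss'_def by (simp add: frac_le add_pos_pos)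

lemma logloss'_lipschitz:
  assumes "a \<le> b"
  shows "logloss' b - logloss' a \<le> (b - a) / 4"
proof -
  have "logloss' b - b / 4 \<le> logloss' a - a / 4"
  proof (rule deriv_nonpos_imp_antimono[where g = "\<lambda>x. logloss' x - x / 4"
        and g' = "\<lambda>x. exp x / (1 + exp x)^2 - 1 / 4"])
    show "((\<lambda>x. logloss' x - x / 4) has_real_derivative exp x / (1 + exp x)^2 - 1 / 4) (at x)" for x
      by (auto intro!: derivative_eq_intros DERIV_logloss')
    show "exp x / (1 + exp x)^2 - 1 / 4 \<le> 0" for x :: real
      using exp_div_one_plus_exp_squared_le[of x] by linarith
  qed (rule assms)
  then show ?thesis by simp
qed

lemma logloss_ge_tangent: "logloss a + logloss' a * (b - a) \<le> logloss b"
proof -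
  have "logloss a - logloss' a * (a - a) \<le> logloss b - logloss' a * (b - a)"
  proof (rule min_at_derivative_sign_change[where h = "\<lambda>x. logloss x - logloss' a * (x - a)"
        and h' = "\<lambda>x. logloss' x - logloss' a"])
    show "((\<lambda>x. logloss x - logloss' a * (x - a)) has_real_derivative logloss' x - logloss' a) (at x)"
      for x by (auto intro!: derivative_eq_intros DERIV_logloss)
  qed (simp_all add: logloss'_mono)
  then show ?thesis by simp
qed

lemma logloss_le_quadratic: "logloss b \<le> logloss a + logloss' a * (b - a) + (b - a)^2 / 8"
proof -
  let ?h = "\<lambda>x. logloss' a * (x - a) + (x - a)^2 / 8 - logloss x"
  have "?h a \<le> ?h b"
  proof (rule min_at_derivative_sign_change[where h = ?h
        and h' = "\<lambda>x. logloss' a + (x - a) / 4 - logloss' x"])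
    show "(?h has_real_derivative logloss' a + (x - a) / 4 - logloss' x) (at x)" for x
      by (auto intro!: derivative_eq_intros DERIV_logloss simp: power2_eq_square field_simps)
    show "0 \<le> logloss' a + (x - a) / 4 - logloss' x" if "a \<le> x" for x
      using logloss'_lipschitz[OF that] by linarith
    show "logloss' a + (x - a) / 4 - logloss' x \<le> 0" if "x \<le> a" for x
      using logloss'_lipschitz[OF that] by (simp add: field_simps)
  qed
  then show ?thesis by simp
qed

lemma logloss_three_point:
  "logloss b \<le> logloss c + logloss' a * (b - c) + (b - a)^2 / 8"
  using logloss_le_quadratic[of b a] logloss_ge_tangent[of a c] by (simp add: algebra_simps)

lemma frob_squared: "(frob m d A)^2 = frob_inner m d A A"
  unfolding frob_def frob_inner_def by (simp add: sum_nonneg power2_eq_square)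

lemma frob_inner_commute: "frob_inner m d A B = frob_inner m d B A"
  unfolding frob_inner_def by (simp add: mult.commute)

lemma frob_inner_self_nonneg: "0 \<le> frob_inner m d A A"
  unfolding frob_inner_def by (intro sum_nonneg) auto

lemma frob_inner_scale_left: "frob_inner m d (\<lambda>j l. c * A j l) B = c * frob_inner m d A B"
  unfolding frob_inner_def by (simp add: sum_distrib_left mult.assoc)

lemma frob_inner_diff_right:
  "frob_inner m d A (\<lambda>j l. X j l - Y j l) = frob_inner m d A X - frob_inner m d A Y"
  unfolding frob_inner_def by (simp add: right_diff_distrib sum_subtractf)

lemma frob_inner_diff_scale_right:
  "frob_inner m d A (\<lambda>j l. X j l - c * Y j l) = frob_inner m d A X - c * frob_inner m d A Y"
  unfolding frob_inner_def
  by (simp add: right_diff_distrib sum_subtractf sum_distrib_left algebra_simps)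

lemma frob_inner_self_diff_scale:
  "frob_inner m d (\<lambda>j l. X j l - c * Y j l) (\<lambda>j l. X j l - c * Y j l)
     = frob_inner m d X X - 2 * c * frob_inner m d X Y + c^2 * frob_inner m d Y Y"
  unfolding frob_inner_def
  by (simp add: sum_subtractf sum_distrib_left sum.distrib power2_eq_square algebra_simps)

lemma frob_inner_eq_sum_pairs:
  "frob_inner m d A B = (\<Sum>(j, l)\<in>{..<m} \<times> {..<d}. A j l * B j l)"
  unfolding frob_inner_def by (simp add: sum.cartesian_product)

lemma frob_inner_Cauchy_Schwarz:
  "(frob_inner m d A B)^2 \<le> frob_inner m d A A * frob_inner m d B B"
  unfolding frob_inner_eq_sum_pairs
  using Cauchy_Schwarz_ineq_sum[of "\<lambda>(j, l). A j l" "\<lambda>(j, l). B j l" "{..<m} \<times> {..<d}"]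
  by (simp add: case_prod_beta power2_eq_square)

definition linear_risk :: "nat \<Rightarrow> nat \<Rightarrow> nat \<Rightarrow> (nat \<Rightarrow> mat) \<Rightarrow> mat \<Rightarrow> real" where
  "linear_risk m d n h V = (1 / real n) * (\<Sum>k<n. logloss (frob_inner m d (h k) V))"

definition linear_risk_grad :: "nat \<Rightarrow> nat \<Rightarrow> nat \<Rightarrow> (nat \<Rightarrow> mat) \<Rightarrow> mat \<Rightarrow> mat" where
  "linear_risk_grad m d n h V = (\<lambda>j l. (1 / real n) *
      (\<Sum>k<n. logloss' (frob_inner m d (h k) V) * h k j l))"

lemma frob_inner_linear_risk_grad:
  "frob_inner m d (linear_risk_grad m d n h W) D =
     (1 / real n) * (\<Sum>k<n. logloss' (frob_inner m d (h k) W) * frob_inner m d (h k) D)"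
proof -
  let ?c = "\<lambda>k. logloss' (frob_inner m d (h k) W)"
  let ?P = "{..<m} \<times> {..<d}"
  have "frob_inner m d (linear_risk_grad m d n h W) D
      = (1 / real n) * (\<Sum>p\<in>?P. \<Sum>k<n. ?c k * h k (fst p) (snd p) * D (fst p) (snd p))"
    unfolding frob_inner_eq_sum_pairs linear_risk_grad_def
    by (simp add: case_prod_beta sum_distrib_left sum_distrib_right mult.assoc)
  also have "\<dots> = (1 / real n) * (\<Sum>k<n. \<Sum>p\<in>?P. ?c k * h k (fst p) (snd p) * D (fst p) (snd p))"
    by (simp only: sum.swap[of _ ?P "{..<n}"])
  also have "\<dots> = (1 / real n) * (\<Sum>k<n. ?c k * frob_inner m d (h k) D)"
    unfolding frob_inner_eq_sum_pairs by (simp add: case_prod_beta sum_distrib_left mult.assoc)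
  finally show ?thesis .
qed

lemma linear_risk_step_upper_bound:
  fixes W Z :: mat
  assumes "\<And>k. k < n \<Longrightarrow> frob_inner m d (h k) (h k) \<le> B"
    and "0 \<le> \<eta>" and "\<eta> * B \<le> 4"
  defines "G \<equiv> linear_risk_grad m d n h W"
  defines "W' \<equiv> \<lambda>j l. W j l - \<eta> * G j l"
  shows "linear_risk m d n h W' \<le> linear_risk m d n h Z
           + frob_inner m d G (\<lambda>j l. W' j l - Z j l) + \<eta> * frob_inner m d G G / 2"
proof -
  define N where "N = frob_inner m d G G"
  have "N \<ge> 0" unfolding N_def by (rule frob_inner_self_nonneg)
  define s where "s k V = frob_inner m d (h k) V" for k V
  have per_sample: "logloss (s k W') \<le> logloss (s k Z)
      + logloss' (s k W) * s k (\<lambda>j l. W' j l - Z j l) + \<eta> * N / 2" if "k < n" for k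
  proof -
    have "(s k W' - s k W)^2 = \<eta> * (\<eta> * (frob_inner m d (h k) G)^2)"
      unfolding s_def W'_def frob_inner_diff_scale_right by (simp add: power2_eq_square)
    also have "\<dots> \<le> \<eta> * (\<eta> * (B * N))"
    proof -
      have "(frob_inner m d (h k) G)^2 \<le> B * N"
        using order.trans[OF frob_inner_Cauchy_Schwarz[of m d "h k" G, folded N_def]
            mult_right_mono[OF assms(1)[OF that] \<open>N \<ge> 0\<close>]] .
      then show ?thesis
        using \<open>0 \<le> \<eta>\<close> by (intro mult_left_mono) auto
    qed
    also have "\<dots> = \<eta> * ((\<eta> * B) * N)"
      by (simp only: mult.assoc)
    also have "\<dots> \<le> \<eta> * (4 * N)"
      using mult_right_mono[OF assms(3) \<open>N \<ge> 0\<close>] \<open>0 \<le> \<eta>\<close> by (rule mult_left_mono)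
    finally have "(s k W' - s k W)^2 / 8 \<le> \<eta> * N / 2" by simp
    moreover have "s k W' - s k Z = s k (\<lambda>j l. W' j l - Z j l)"
      unfolding s_def frob_inner_diff_right ..
    ultimately show ?thesis
      using logloss_three_point[of "s k W'" "s k Z" "s k W"] by simp
  qed
  have "linear_risk m d n h W' \<le> (1 / real n) * (\<Sum>k<n. logloss (s k Z)
      + logloss' (s k W) * s k (\<lambda>j l. W' j l - Z j l) + \<eta> * N / 2)"
    unfolding linear_risk_def s_def[symmetric] using per_sample by (intro mult_left_mono sum_mono) auto
  also have "\<dots> = linear_risk m d n h Z + frob_inner m d G (\<lambda>j l. W' j l - Z j l)
      + real n / real n * (\<eta> * N / 2)"
    unfolding linear_risk_def G_def frob_inner_linear_risk_grad s_def
    by (simp add: sum.distrib distrib_left)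
  also have "\<dots> \<le> linear_risk m d n h Z + frob_inner m d G (\<lambda>j l. W' j l - Z j l) + \<eta> * N / 2"
    using \<open>N \<ge> 0\<close> \<open>0 \<le> \<eta>\<close> by (cases "n = 0") auto
  finally show ?thesis unfolding N_def .
qed

lemma linear_risk_descent_step:
  fixes W Z :: mat
  assumes "\<And>k. k < n \<Longrightarrow> frob_inner m d (h k) (h k) \<le> B"
    and "0 \<le> \<eta>" and "\<eta> * B \<le> 4"
  defines "G \<equiv> linear_risk_grad m d n h W"
  defines "W' \<equiv> \<lambda>j l. W j l - \<eta> * G j l"
  shows "(frob m d (\<lambda>j l. W' j l - Z j l))^2 + 2 * \<eta> * linear_risk m d n h W'
           \<le> (frob m d (\<lambda>j l. W j l - Z j l))^2 + 2 * \<eta> * linear_risk m d n h Z"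
proof -
  define D where "D = (\<lambda>j l. W j l - Z j l)"
  define N where "N = frob_inner m d G G"
  have step_diff: "(\<lambda>j l. W' j l - Z j l) = (\<lambda>j l. D j l - \<eta> * G j l)"
    unfolding W'_def D_def by (simp add: algebra_simps)
  have "linear_risk m d n h W' \<le> linear_risk m d n h Z
      + frob_inner m d G (\<lambda>j l. W' j l - Z j l) + \<eta> * N / 2"
    using linear_risk_step_upper_bound[where n = n and h = h and W = W and Z = Z, OF assms(1-3)]
    unfolding G_def W'_def N_def .
  moreover have "frob_inner m d G (\<lambda>j l. W' j l - Z j l) = frob_inner m d G D - \<eta> * N"
    unfolding step_diff frob_inner_diff_scale_right N_def ..
  ultimately have risk: "linear_risk m d n h W' \<le> linear_risk m d n h Z + frob_inner m d G D - \<eta> * N / 2"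
    by linarith
  have "(frob m d (\<lambda>j l. W' j l - Z j l))^2 + 2 * \<eta> * linear_risk m d n h W'
      = (frob m d D)^2 - 2 * \<eta> * frob_inner m d G D + \<eta>^2 * N + 2 * \<eta> * linear_risk m d n h W'"
    unfolding step_diff frob_squared frob_inner_self_diff_scale N_def
    by (simp add: frob_inner_commute)
  also have "\<dots> \<le> (frob m d D)^2 - 2 * \<eta> * frob_inner m d G D + \<eta>^2 * N
      + 2 * \<eta> * (linear_risk m d n h Z + frob_inner m d G D - \<eta> * N / 2)"
    using mult_left_mono[OF risk, of "2 * \<eta>"] \<open>0 \<le> \<eta>\<close> by simp
  also have "\<dots> = (frob m d D)^2 + 2 * \<eta> * linear_risk m d n h Z"
    by (simp add: algebra_simps power2_eq_square)
  finally show ?thesis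
    unfolding D_def .
qed

lemma net_eq_frob_inner_net_grad: "net m d \<rho> a W x = frob_inner m d (net_grad m d \<rho> a W x) W"
proof -
  have "\<rho> / sqrt (real m) * (a j * max 0 (row_dot d W j x))
      = (\<Sum>l<d. net_grad m d \<rho> a W x j l * W j l)" if "j < m" for j
    using that unfolding row_dot_def net_grad_def
    by (auto simp: sum_distrib_left sum_divide_distrib max_def algebra_simps intro!: sum.cong)
  then show ?thesis
    unfolding net_def frob_inner_def by (simp add: sum_distrib_left)
qed

lemma frob_inner_net_grad_self_le:
  assumes "vnorm d x \<le> 1" and "\<And>j. j < m \<Longrightarrow> \<bar>a j\<bar> \<le> 1"
  shows "frob_inner m d (net_grad m d \<rho> a W x) (net_grad m d \<rho> a W x) \<le> \<rho>^2"
proof -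
  have x_sq: "(\<Sum>l<d. (x l)^2) \<le> 1"
    using assms(1) unfolding vnorm_def by simp
  have row: "(\<Sum>l<d. net_grad m d \<rho> a W x j l * net_grad m d \<rho> a W x j l) \<le> \<rho>^2 / real m"
    if "j < m" for j
  proof -
    define c where "c = \<rho> / sqrt (real m) * a j * (if row_dot d W j x \<ge> 0 then 1 else 0)"
    have "(\<Sum>l<d. net_grad m d \<rho> a W x j l * net_grad m d \<rho> a W x j l) = c^2 * (\<Sum>l<d. (x l)^2)"
      using that unfolding net_grad_def c_def
      by (simp add: sum_distrib_left sum_divide_distrib power2_eq_square algebra_simps)
    also have "\<dots> \<le> c^2"
      using x_sq by (simp add: mult_left_le)
    also have "\<dots> \<le> \<rho>^2 / real m"
    proof -
      have "\<rho>^2 * (a j)^2 \<le> \<rho>^2"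
        using assms(2)[OF that] abs_le_square_iff[of "a j" 1] by (simp add: mult_left_le)
      then show ?thesis
        by (auto simp: c_def power_mult_distrib power_divide divide_right_mono)
    qed
    finally show ?thesis .
  qed
  have "frob_inner m d (net_grad m d \<rho> a W x) (net_grad m d \<rho> a W x) \<le> (\<Sum>j<m. \<rho>^2 / real m)"
    unfolding frob_inner_def using row by (intro sum_mono) simp
  also have "\<dots> \<le> \<rho>^2"
    by (cases "m = 0") auto
  finally show ?thesis .
qed

definition margin_features ::
  "nat \<Rightarrow> nat \<Rightarrow> real \<Rightarrow> vec \<Rightarrow> (nat \<Rightarrow> vec) \<Rightarrow> (nat \<Rightarrow> real) \<Rightarrow> mat \<Rightarrow> nat \<Rightarrow> mat" where
  "margin_features m d \<rho> a xs ys W k = (\<lambda>j l. ys k * net_grad m d \<rho> a W (xs k) j l)"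

lemma lin_risk_eq_linear_risk:
  "lin_risk m d \<rho> a n xs ys W V = linear_risk m d n (margin_features m d \<rho> a xs ys W) V"
  unfolding lin_risk_def linear_risk_def margin_features_def frob_inner_scale_left ..

lemma emp_risk_grad_eq_linear_risk_grad:
  "emp_risk_grad m d \<rho> a n xs ys W = linear_risk_grad m d n (margin_features m d \<rho> a xs ys W) W"
  unfolding emp_risk_grad_def linear_risk_grad_def margin_features_def frob_inner_scale_left
    net_eq_frob_inner_net_grad
  by (simp add: mult.assoc)

lemma frob_inner_margin_features_self_le:
  assumes "\<bar>ys k\<bar> \<le> 1" and "vnorm d (xs k) \<le> 1" and "\<And>j. j < m \<Longrightarrow> \<bar>a j\<bar> \<le> 1"
  shows "frob_inner m d (margin_features m d \<rho> a xs ys W k) (margin_features m d \<rho> a xs ys W k) \<le> \<rho>^2"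
proof -
  let ?g = "net_grad m d \<rho> a W (xs k)"
  have "frob_inner m d (margin_features m d \<rho> a xs ys W k) (margin_features m d \<rho> a xs ys W k)
      = (ys k)^2 * frob_inner m d ?g ?g"
    unfolding margin_features_def frob_inner_def
    by (simp add: sum_distrib_left power2_eq_square algebra_simps)
  also have "\<dots> \<le> frob_inner m d ?g ?g"
    using assms(1) abs_le_square_iff[of "ys k" 1] frob_inner_self_nonneg[of m d ?g]
    by (simp add: mult_left_le_one_le)
  also have "\<dots> \<le> \<rho>^2"
    using frob_inner_net_grad_self_le[OF assms(2,3)] .
  finally show ?thesis .
qed

lemma emp_risk_descent_step:
  fixes W Z :: mat
  assumes "\<And>k. k < n \<Longrightarrow> \<bar>ys k\<bar> \<le> 1" and "\<And>k. k < n \<Longrightarrow> vnorm d (xs k) \<le> 1"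
    and "\<And>j. j < m \<Longrightarrow> \<bar>a j\<bar> \<le> 1"
    and "0 \<le> \<eta>" and "\<eta> * \<rho>^2 \<le> 4"
  defines "W' \<equiv> \<lambda>j l. W j l - \<eta> * emp_risk_grad m d \<rho> a n xs ys W j l"
  shows "(frob m d (\<lambda>j l. W' j l - Z j l))^2 + 2 * \<eta> * lin_risk m d \<rho> a n xs ys W W'
           \<le> (frob m d (\<lambda>j l. W j l - Z j l))^2 + 2 * \<eta> * lin_risk m d \<rho> a n xs ys W Z"
  unfolding W'_def emp_risk_grad_eq_linear_risk_grad lin_risk_eq_linear_risk
proof (rule linear_risk_descent_step[where h = "margin_features m d \<rho> a xs ys W" and B = "\<rho>^2"])
  show "frob_inner m d (margin_features m d \<rho> a xs ys W k) (margin_features m d \<rho> a xs ys W k) \<le> \<rho>^2"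
    if "k < n" for k
    using frob_inner_margin_features_self_le assms(1,2)[OF that] assms(3) .
qed (use assms(4,5) in simp_all)

lemma telescoping_sum_bound:
  fixes D f g :: "nat \<Rightarrow> real"
  assumes "\<And>i. D (Suc i) + c * f i \<le> D i + c * g i"
  shows "D t + c * (\<Sum>i<t. f i) \<le> D 0 + c * (\<Sum>i<t. g i)"
proof (induction t)
  case (Suc t)
  then show ?case
    using assms[of t] by (simp add: distrib_left)
qed simp

theorem lemmaA10:
  fixes m d n :: nat and \<rho> \<eta> :: real and a :: vec
    and xs :: "nat \<Rightarrow> vec" and ys :: "nat \<Rightarrow> real" and W0 Z :: mat and t :: nat
  assumes "0 < n" and "0 < m"
    and "\<And>k. k < n \<Longrightarrow> vnorm d (xs k) \<le> 1"
    and "\<And>k. k < n \<Longrightarrow> ys k = 1 \<or> ys k = -1"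
    and "\<And>j. j < m \<Longrightarrow> a j = 1 \<or> a j = -1"
    and "0 < \<rho>"
    and "0 < \<eta>" and "\<eta> \<le> 4 / \<rho>^2"
  shows "(frob m d (\<lambda>j l. gd m d \<rho> a n xs ys \<eta> W0 t j l - Z j l))^2
           + 2 * \<eta> * (\<Sum>i<t. lin_risk m d \<rho> a n xs ys (gd m d \<rho> a n xs ys \<eta> W0 i)
                                   (gd m d \<rho> a n xs ys \<eta> W0 (Suc i)))
         \<le> (frob m d (\<lambda>j l. W0 j l - Z j l))^2
           + 2 * \<eta> * (\<Sum>i<t. lin_risk m d \<rho> a n xs ys (gd m d \<rho> a n xs ys \<eta> W0 i) Z)"
proof -
  let ?W = "gd m d \<rho> a n xs ys \<eta> W0"
  let ?D = "\<lambda>i. (frob m d (\<lambda>j l. ?W i j l - Z j l))^2"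
  have "\<bar>ys k\<bar> \<le> 1" if "k < n" for k
    using assms(4)[OF that] by auto
  moreover have "\<bar>a j\<bar> \<le> 1" if "j < m" for j
    using assms(5)[OF that] by auto
  moreover have "\<eta> * \<rho>^2 \<le> 4"
    using assms(6,8) by (simp add: field_simps)
  ultimately have "?D (Suc i) + 2 * \<eta> * lin_risk m d \<rho> a n xs ys (?W i) (?W (Suc i))
      \<le> ?D i + 2 * \<eta> * lin_risk m d \<rho> a n xs ys (?W i) Z" for i
    using emp_risk_descent_step[where W = "?W i" and Z = Z] assms(3,7)
    by (simp add: Let_def)
  from telescoping_sum_bound[where D = ?D, OF this] show ?thesis
    by (simp only: gd.simps(1))
qed

end
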